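(* Let $r>0$ and let $\mu:[0,\infty)\to\mathbb R$ and $\sigma:[0,\infty)\to(0,\infty)$ be globally Lipschitz continuous, and suppose there exist constants $\kappa\ge0$ and $c>0$ such that $x\mapsto\mu(x)-(r+c)x$ is strictly increasing on $[\kappa,\infty)$. Let $\psi\in C^2[0,\infty)$ be the non-negative increasing solution of $\frac{\sigma^2(x)}{2}f''(x)+\mu(x)f'(x)=rf(x)$ with $\psi(0)=0$, $\psi'(0)=1$. Then: (I) $\psi'(x)>0$ for all $x\ge0$. (II) There exists a unique point $b_2\in[\kappa,\infty)$ such that $\psi''(x)>0$ for $x\in(\kappa,b_2)$ and $\psi''(x)<0$ for $x\in(b_2,\infty)$. (III) $\psi'(n)\to0$ as $n\to\infty$. *)

theory Defs
  imports "HOL-Analysis.Analysis"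
begin

end

(* The sign of psi'' is the sign of r psi - mu psi'.
   (I) At a first zero s of psi' we would have psi s > 0, hence psi'' s > 0, so psi' would be
   negative just before s.
   (II) At a zero z > kappa of psi'' we have r psi z = mu z psi' z; since mu grows faster than
   (r + c) x, the difference quotients of r psi - mu psi' at z are bounded by a quantity
   tending to -c psi' z < 0.
   So every zero of psi'' beyond kappa is a downward crossing, and a continuous function with
   only downward crossings changes sign at most once. It does change sign, because
   mu psi' < r psi cannot persist: with psi' increasing, r psi grows like r x psi' while
   mu psi' grows like (r + c) x psi'.
   (III) Beyond the inflection point psi' decreases to some L >= 0. If L > 0, then
   mu psi' - r psi grows linearly while sigma grows at most linearly, so psi'' <= -beta / x,
   and integrating drives psi' below 0. *)

theory Submission
  imports Defs
begin

lemma first_zero: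
  fixes f :: "real \<Rightarrow> real"
  assumes cont: "continuous_on {a..b} f" and "a \<le> b" and "f a > 0" and "f b \<le> 0"
  obtains s where "a < s" "s \<le> b" "f s = 0" "\<And>u. a \<le> u \<Longrightarrow> u < s \<Longrightarrow> f u > 0"
proof -
  let ?Z = "{a..b} \<inter> f -` {..0}"
  have "closed ?Z" by (intro continuous_closed_preimage[OF cont]) auto
  then have "compact ?Z" by (meson bounded_Int bounded_closed_interval compact_eq_bounded_closed)
  moreover have "?Z \<noteq> {}" using assms by auto
  ultimately obtain s where s: "s \<in> ?Z" and least: "\<And>y. y \<in> ?Z \<Longrightarrow> s \<le> y"
    using compact_attains_inf by metis
  have before: "f u > 0" if "a \<le> u" "u < s" for u
    using least[of u] that s by force
  have "a < s" using s \<open>f a > 0\<close> by (auto simp: order.order_iff_strict)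
  moreover have "f s = 0"
  proof (rule ccontr)
    assume "f s \<noteq> 0"
    with s have "f s < 0" by auto
    moreover have "continuous_on {a..s} f"
      using s by (intro continuous_on_subset[OF cont]) auto
    ultimately obtain u where "a \<le> u" "u \<le> s" "f u = 0"
      using IVT2'[of f s 0 a] \<open>f a > 0\<close> \<open>a < s\<close> by auto
    then show False using before[of u] \<open>f s < 0\<close> by (cases "u = s") auto
  qed
  ultimately show ?thesis using that s before by auto
qed

lemma diff_le_by_deriv_bound:
  fixes f f' :: "real \<Rightarrow> real"
  assumes "a \<le> b" and "continuous_on {a..b} f"
    and "\<And>x. a < x \<Longrightarrow> x < b \<Longrightarrow> (f has_real_derivative f' x) (at x)"
    and "\<And>x. a < x \<Longrightarrow> x < b \<Longrightarrow> f' x \<le> B"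
  shows "f b - f a \<le> B * (b - a)"
proof -
  have "B * a - f a \<le> B * b - f b"
  proof (rule DERIV_nonneg_imp_increasing_open[of a b "\<lambda>x. B * x - f x"])
    fix x assume "a < x" "x < b"
    then show "\<exists>y. ((\<lambda>x. B * x - f x) has_real_derivative y) (at x) \<and> 0 \<le> y"
      using assms by (intro exI[of _ "B - f' x"]) (auto intro!: derivative_eq_intros)
  qed (use assms in \<open>auto intro!: continuous_intros\<close>)
  then show ?thesis by (simp add: algebra_simps)
qed

lemma slope_gt_of_strict_mono_on_minus_linear:
  fixes f :: "real \<Rightarrow> real"
  assumes "strict_mono_on S (\<lambda>x. f x - a * x)" and "x \<in> S" "y \<in> S" "x < y"
  shows "a * (y - x) < f y - f x"
  using strict_mono_onD[OF assms] by (simp add: algebra_simps)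

lemma lipschitz_on_linear_growth:
  fixes f :: "real \<Rightarrow> real"
  assumes "K-lipschitz_on {0..} f" and "1 \<le> x"
  shows "\<bar>f x\<bar> \<le> (\<bar>f 0\<bar> + K) * x"
proof -
  have "\<bar>f x - f 0\<bar> \<le> K * x"
    using lipschitz_onD[OF assms(1), of x 0] assms(2) by (simp add: dist_real_def)
  moreover have "\<bar>f 0\<bar> \<le> \<bar>f 0\<bar> * x"
    using assms(2) by (simp add: mult_le_cancel_left1)
  ultimately show ?thesis by (simp add: algebra_simps)
qed

lemma eventually_linear_nonneg_at_top:
  fixes m b :: real
  assumes "0 < m"
  shows "\<forall>\<^sub>F x in at_top. 0 \<le> m * x + b"
  using eventually_ge_at_top[of "- b / m"]
proof eventually_elim
  case (elim x)
  then have "- b \<le> m * x" using assms by (simp add: field_simps)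
  then show ?case by simp
qed

lemma deriv_le_neg_inverse_unbounded_below:
  fixes f f' :: "real \<Rightarrow> real"
  assumes "0 < X" and "\<beta> > 0"
    and deriv: "\<And>x. X \<le> x \<Longrightarrow> (f has_real_derivative f' x) (at x)"
    and bound: "\<And>x. X \<le> x \<Longrightarrow> f' x \<le> - \<beta> / x"
  shows "\<exists>y\<ge>X. f y < B"
proof -
  define k where "k = \<bar>f X - B\<bar> / \<beta> + 1"
  define Y where "Y = X * exp k"
  have "0 < k" unfolding k_def using \<open>\<beta> > 0\<close> by (simp add: add_nonneg_pos)
  then have "X \<le> Y" unfolding Y_def using \<open>0 < X\<close> by simp
  have "(f Y + \<beta> * ln Y) - (f X + \<beta> * ln X) \<le> 0 * (Y - X)"
  proof (rule diff_le_by_deriv_bound[where f' = "\<lambda>x. f' x + \<beta> / x"])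
    show "continuous_on {X..Y} (\<lambda>x. f x + \<beta> * ln x)"
      using \<open>0 < X\<close> by (intro continuous_at_imp_continuous_on ballI continuous_intros
          DERIV_isCont[OF deriv]) auto
    show "f' x + \<beta> / x \<le> 0" if "X < x" for x
      using bound[of x] that by simp
  qed (use \<open>X \<le> Y\<close> \<open>0 < X\<close> deriv in \<open>auto intro!: derivative_eq_intros\<close>)
  moreover have "ln Y = ln X + k"
    unfolding Y_def using \<open>0 < X\<close> by (simp add: ln_mult)
  moreover have "\<beta> * k = \<bar>f X - B\<bar> + \<beta>"
    unfolding k_def using \<open>\<beta> > 0\<close> by (simp add: field_simps)
  ultimately have "f Y \<le> f X - \<bar>f X - B\<bar> - \<beta>"
    by (simp add: algebra_simps)
  then show ?thesis using \<open>X \<le> Y\<close> \<open>\<beta> > 0\<close> by force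
qed

lemma negative_after_downcrossing:
  fixes f :: "real \<Rightarrow> real"
  assumes cont: "continuous_on {k<..} f"
    and cross: "\<And>z. k < z \<Longrightarrow> f z = 0 \<Longrightarrow>
      (\<forall>\<^sub>F t in at_left z. 0 < f t) \<and> (\<forall>\<^sub>F t in at_right z. f t < 0)"
    and "k < z" "f z \<le> 0" "z < t"
  shows "f t < 0"
proof -
  obtain z' where z': "z \<le> z'" "z' < t" "f z' < 0"
  proof (cases "f z = 0")
    case True
    then have "\<forall>\<^sub>F u in at_right z. f u < 0"
      using cross[OF \<open>k < z\<close>] by blast
    moreover have "\<forall>\<^sub>F u in at_right z. z < u \<and> u < t"
      by (rule eventually_at_rightI[OF _ \<open>z < t\<close>]) simp
    ultimately have "\<forall>\<^sub>F u in at_right z. f u < 0 \<and> z < u \<and> u < t"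
      by eventually_elim simp
    then obtain u where "f u < 0" "z < u" "u < t"
      using eventually_happens'[OF trivial_limit_at_right_real] by blast
    then show ?thesis using that[of u] by simp
  next
    case False
    then show ?thesis using that[of z] assms by simp
  qed
  show "f t < 0"
  proof (rule ccontr)
    assume "\<not> f t < 0"
    have "continuous_on {z'..t} (\<lambda>u. - f u)"
      using z' \<open>k < z\<close> by (intro continuous_intros continuous_on_subset[OF cont]) auto
    then obtain s where s: "z' < s" "s \<le> t" "f s = 0" and neg: "\<And>u. z' \<le> u \<Longrightarrow> u < s \<Longrightarrow> f u < 0"
      by (rule first_zero) (use z' \<open>\<not> f t < 0\<close> in simp_all)
    have "\<forall>\<^sub>F u in at_left s. 0 < f u"
      using cross[of s] s z' \<open>k < z\<close> by auto
    moreover have "\<forall>\<^sub>F u in at_left s. z' < u \<and> u < s"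
      by (rule eventually_at_leftI[OF _ \<open>z' < s\<close>]) simp
    ultimately have "\<forall>\<^sub>F u in at_left s. 0 < f u \<and> z' < u \<and> u < s"
      by eventually_elim simp
    then obtain u where "0 < f u" "z' < u" "u < s"
      using eventually_happens'[OF trivial_limit_at_left_real] by blast
    with neg[of u] show False by simp
  qed
qed

lemma unique_downcrossing:
  fixes f :: "real \<Rightarrow> real"
  assumes cont: "continuous_on {k<..} f"
    and cross: "\<And>z. k < z \<Longrightarrow> f z = 0 \<Longrightarrow>
      (\<forall>\<^sub>F t in at_left z. 0 < f t) \<and> (\<forall>\<^sub>F t in at_right z. f t < 0)"
    and nonpos: "\<exists>x>k. f x \<le> 0"
  shows "\<exists>!b. k \<le> b \<and> (\<forall>x\<in>{k<..<b}. 0 < f x) \<and> (\<forall>x\<in>{b<..}. f x < 0)"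
proof -
  let ?P = "\<lambda>b. k \<le> b \<and> (\<forall>x\<in>{k<..<b}. 0 < f x) \<and> (\<forall>x\<in>{b<..}. f x < 0)"
  define N where "N = {x. k < x \<and> f x \<le> 0}"
  have "N \<noteq> {}" using nonpos unfolding N_def by auto
  have "bdd_below N" unfolding N_def by (auto intro: bdd_belowI[of _ k])
  have inf: "?P (Inf N)"
  proof (intro conjI ballI)
    show "k \<le> Inf N"
      using \<open>N \<noteq> {}\<close> unfolding N_def by (auto intro: cInf_greatest)
  next
    fix x assume x: "x \<in> {k<..<Inf N}"
    show "0 < f x"
    proof (rule ccontr)
      assume "\<not> 0 < f x"
      with x have "x \<in> N" unfolding N_def by simp
      then have "Inf N \<le> x" using \<open>bdd_below N\<close> by (rule cInf_lower)
      with x show False by simp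
    qed
  next
    fix x assume "x \<in> {Inf N<..}"
    then obtain y where "y \<in> N" "y < x"
      using cInf_lessD[OF \<open>N \<noteq> {}\<close>] by auto
    then show "f x < 0"
      unfolding N_def by (intro negative_after_downcrossing[OF cont cross]) auto
  qed
  have le: "b \<le> b'" if b: "?P b" and b': "?P b'" for b b'
  proof (rule ccontr)
    assume "\<not> b \<le> b'"
    define m where "m = (b + b') / 2"
    have "m \<in> {k<..<b}" "m \<in> {b'<..}"
      using b' \<open>\<not> b \<le> b'\<close> unfolding m_def by auto
    then have "0 < f m" "f m < 0"
      using b b' by blast+
    then show False by simp
  qed
  show ?thesis
  proof (rule ex1I[of ?P "Inf N"])
    show "?P b \<Longrightarrow> b = Inf N" for b
      using le[OF _ inf, of b] le[OF inf, of b] by simp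
  qed (fact inf)
qed

locale increasing_fundamental_solution =
  fixes r c \<kappa> :: real and \<mu> \<sigma> \<psi> \<psi>' \<psi>'' :: "real \<Rightarrow> real"
  assumes r_pos: "r > 0" and c_pos: "c > 0" and kappa_nonneg: "\<kappa> \<ge> 0"
    and sigma_lip: "\<exists>L. L-lipschitz_on {0..} \<sigma>"
    and sigma_pos: "\<And>x. x \<ge> 0 \<Longrightarrow> \<sigma> x > 0"
    and mono_drift: "strict_mono_on {\<kappa>..} (\<lambda>x. \<mu> x - (r + c) * x)"
    and d1: "\<And>x. x \<ge> 0 \<Longrightarrow> (\<psi> has_real_derivative \<psi>' x) (at x within {0..})"
    and d2: "\<And>x. x \<ge> 0 \<Longrightarrow> (\<psi>' has_real_derivative \<psi>'' x) (at x within {0..})"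
    and d2_cont: "continuous_on {0..} \<psi>''"
    and ode: "\<And>x. x \<ge> 0 \<Longrightarrow> (\<sigma> x)\<^sup>2 / 2 * \<psi>'' x + \<mu> x * \<psi>' x = r * \<psi> x"
    and init0: "\<psi> 0 = 0" and init1: "\<psi>' 0 = 1"
begin

lemma psi_deriv: "x > 0 \<Longrightarrow> (\<psi> has_real_derivative \<psi>' x) (at x)"
  using d1[of x] at_within_interior[of x "{0..}"] by simp

lemma psi'_deriv: "x > 0 \<Longrightarrow> (\<psi>' has_real_derivative \<psi>'' x) (at x)"
  using d2[of x] at_within_interior[of x "{0..}"] by simp

lemma continuous_on_psi: "continuous_on {0..} \<psi>"
  using DERIV_continuous[OF d1] by (auto simp: continuous_on_eq_continuous_within)

lemma continuous_on_psi': "continuous_on {0..} \<psi>'"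
  using DERIV_continuous[OF d2] by (auto simp: continuous_on_eq_continuous_within)

lemma psi''_eq: "x \<ge> 0 \<Longrightarrow> \<psi>'' x = 2 * (r * \<psi> x - \<mu> x * \<psi>' x) / (\<sigma> x)\<^sup>2"
  using ode[of x] sigma_pos[of x] by (simp add: field_simps)

lemma psi''_pos_iff: "x \<ge> 0 \<Longrightarrow> \<psi>'' x > 0 \<longleftrightarrow> \<mu> x * \<psi>' x < r * \<psi> x"
  using sigma_pos[of x] by (simp add: psi''_eq zero_less_divide_iff)

lemma psi''_neg_iff: "x \<ge> 0 \<Longrightarrow> \<psi>'' x < 0 \<longleftrightarrow> r * \<psi> x < \<mu> x * \<psi>' x"
  using sigma_pos[of x] by (simp add: psi''_eq divide_less_0_iff)

lemma psi''_eq_0_iff: "x \<ge> 0 \<Longrightarrow> \<psi>'' x = 0 \<longleftrightarrow> r * \<psi> x = \<mu> x * \<psi>' x"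
  using sigma_pos[of x] by (simp add: psi''_eq)

lemma psi_pos_if_psi'_pos_before:
  assumes "0 < s" and "\<And>u. 0 < u \<Longrightarrow> u < s \<Longrightarrow> 0 < \<psi>' u"
  shows "0 < \<psi> s"
proof -
  have "\<psi> 0 < \<psi> s"
  proof (rule DERIV_pos_imp_increasing_open[OF \<open>0 < s\<close>])
    show "\<exists>y. (\<psi> has_real_derivative y) (at u) \<and> y > 0" if "0 < u" "u < s" for u
      using psi_deriv[of u] assms(2)[of u] that by auto
    show "continuous_on {0..s} \<psi>"
      by (rule continuous_on_subset[OF continuous_on_psi]) auto
  qed
  then show ?thesis using init0 by simp
qed

lemma psi'_pos: "x \<ge> 0 \<Longrightarrow> \<psi>' x > 0"
proof (rule ccontr)
  assume "x \<ge> 0" "\<not> \<psi>' x > 0"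
  moreover have "continuous_on {0..x} \<psi>'"
    by (rule continuous_on_subset[OF continuous_on_psi']) auto
  ultimately obtain s where "0 < s" "\<psi>' s = 0" and pos: "\<And>u. 0 \<le> u \<Longrightarrow> u < s \<Longrightarrow> \<psi>' u > 0"
    using first_zero[of 0 x \<psi>'] init1 by auto
  have "0 < \<psi> s"
    using psi_pos_if_psi'_pos_before[OF \<open>0 < s\<close>] pos by simp
  then have "\<psi>'' s > 0"
    using psi''_pos_iff[of s] \<open>0 < s\<close> \<open>\<psi>' s = 0\<close> r_pos by simp
  then obtain d where "d > 0" and left: "\<And>h. 0 < h \<Longrightarrow> h < d \<Longrightarrow> \<psi>' (s - h) < \<psi>' s"
    using DERIV_pos_inc_left[OF psi'_deriv[OF \<open>0 < s\<close>]] by blast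
  define h where "h = min d s / 2"
  have "0 < h" "h < d" "h \<le> s"
    using \<open>d > 0\<close> \<open>0 < s\<close> unfolding h_def by auto
  then have "\<psi>' (s - h) < 0" "\<psi>' (s - h) > 0"
    using left[of h] pos[of "s - h"] \<open>\<psi>' s = 0\<close> by auto
  then show False by simp
qed

lemma psi_pos: "x > 0 \<Longrightarrow> \<psi> x > 0"
  using psi_pos_if_psi'_pos_before psi'_pos by simp

lemma drift_slope_gt: "\<kappa> \<le> x \<Longrightarrow> x < y \<Longrightarrow> (r + c) * (y - x) < \<mu> y - \<mu> x"
  using slope_gt_of_strict_mono_on_minus_linear[OF mono_drift] by simp

lemma drift_quotient_gt:
  assumes "\<kappa> \<le> x" "\<kappa> \<le> y" "x \<noteq> y"
  shows "r + c < (\<mu> y - \<mu> x) / (y - x)"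
proof (cases "x < y")
  case True
  then show ?thesis using drift_slope_gt[of x y] assms by (simp add: pos_less_divide_eq)
next
  case False
  then have "y < x" using assms by simp
  then show ?thesis using drift_slope_gt[of y x] assms by (simp add: neg_less_divide_eq algebra_simps)
qed

lemma psi''_downcrossing:
  assumes "\<kappa> < z" and "\<psi>'' z = 0"
  shows "(\<forall>\<^sub>F t in at_left z. 0 < \<psi>'' t) \<and> (\<forall>\<^sub>F t in at_right z. \<psi>'' t < 0)"
proof -
  have "0 < z" using assms kappa_nonneg by simp
  define p where "p = \<psi>' z"
  have "0 < p" unfolding p_def using psi'_pos \<open>0 < z\<close> by simp
  have balance: "r * \<psi> z = \<mu> z * p"
    using psi''_eq_0_iff[of z] assms \<open>0 < z\<close> unfolding p_def by simp
  \<comment> \<open>bounds the difference quotient of \<open>r \<psi> - \<mu> \<psi>'\<close> at \<open>z\<close> from above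
    and tends to \<open>- c p\<close>\<close>
  define Q where "Q t = r * ((\<psi> t - \<psi> z) / (t - z)) - (r + c) * \<psi>' t - \<mu> z * ((\<psi>' t - p) / (t - z))" for t
  have "((\<lambda>t. (\<psi> t - \<psi> z) / (t - z)) \<longlongrightarrow> p) (at z)"
    using psi_deriv[OF \<open>0 < z\<close>] unfolding p_def has_field_derivative_iff .
  moreover have "((\<lambda>t. (\<psi>' t - p) / (t - z)) \<longlongrightarrow> 0) (at z)"
    using psi'_deriv[OF \<open>0 < z\<close>] assms(2) unfolding p_def has_field_derivative_iff by simp
  moreover have "(\<psi>' \<longlongrightarrow> p) (at z)"
    using DERIV_isCont[OF psi'_deriv[OF \<open>0 < z\<close>]] unfolding p_def isCont_def .
  ultimately have "(Q \<longlongrightarrow> r * p - (r + c) * p - \<mu> z * 0) (at z)"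
    unfolding Q_def by (intro tendsto_intros)
  moreover have "r * p - (r + c) * p - \<mu> z * 0 < 0"
    using c_pos \<open>0 < p\<close> by (simp add: algebra_simps)
  ultimately have "\<forall>\<^sub>F t in at z. Q t < 0"
    by (rule order_tendstoD(2))
  moreover have "\<forall>\<^sub>F t in at z. \<kappa> < t"
    using order_tendstoD(1)[OF tendsto_ident_at \<open>\<kappa> < z\<close>] .
  moreover have "\<forall>\<^sub>F t in at z. t \<noteq> z"
    by (rule eventually_neq_at_within)
  ultimately have quotient_neg: "\<forall>\<^sub>F t in at z. (r * \<psi> t - \<mu> t * \<psi>' t) / (t - z) < 0"
  proof eventually_elim
    case (elim t)
    then have "0 < \<psi>' t" using psi'_pos kappa_nonneg by simp
    then have "(r + c) * \<psi>' t \<le> (\<mu> t - \<mu> z) / (t - z) * \<psi>' t"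
      using drift_quotient_gt[of z t] elim assms(1) by (intro mult_right_mono) auto
    moreover have numerator: "r * \<psi> t - \<mu> t * \<psi>' t =
        r * (\<psi> t - \<psi> z) - (\<mu> t - \<mu> z) * \<psi>' t - \<mu> z * (\<psi>' t - p)"
      using balance by (simp add: algebra_simps)
    have "(r * \<psi> t - \<mu> t * \<psi>' t) / (t - z) =
        r * ((\<psi> t - \<psi> z) / (t - z)) - (\<mu> t - \<mu> z) / (t - z) * \<psi>' t - \<mu> z * ((\<psi>' t - p) / (t - z))"
      unfolding numerator by (simp add: diff_divide_distrib add_divide_distrib ring_distribs)
    ultimately show ?case using elim unfolding Q_def by linarith
  qed
  have "\<forall>\<^sub>F t in at_left z. \<kappa> < t \<and> t < z"
    by (rule eventually_at_leftI[OF _ \<open>\<kappa> < z\<close>]) simp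
  moreover have "\<forall>\<^sub>F t in at_left z. (r * \<psi> t - \<mu> t * \<psi>' t) / (t - z) < 0"
    using quotient_neg by (simp add: eventually_at_split)
  ultimately have left: "\<forall>\<^sub>F t in at_left z. 0 < \<psi>'' t"
    by eventually_elim (use kappa_nonneg in \<open>simp add: psi''_pos_iff divide_less_0_iff\<close>)
  have "\<forall>\<^sub>F t in at_right z. z < t"
    by (rule eventually_at_right_less)
  moreover have "\<forall>\<^sub>F t in at_right z. (r * \<psi> t - \<mu> t * \<psi>' t) / (t - z) < 0"
    using quotient_neg by (simp add: eventually_at_split)
  ultimately have right: "\<forall>\<^sub>F t in at_right z. \<psi>'' t < 0"
    by eventually_elim (use \<open>0 < z\<close> in \<open>simp add: psi''_neg_iff divide_less_0_iff\<close>)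
  from left right show ?thesis ..
qed

lemma psi''_nonpos_somewhere: "\<exists>x>\<kappa>. \<psi>'' x \<le> 0"
proof (rule ccontr)
  assume "\<not> ?thesis"
  then have convex: "\<And>x. \<kappa> < x \<Longrightarrow> 0 < \<psi>'' x" by (simp add: not_le)
  define a where "a = \<kappa> + 1"
  have "0 < a" "\<kappa> < a" unfolding a_def using kappa_nonneg by auto
  have "0 < \<psi>' a" "0 < \<psi> a" using psi'_pos psi_pos \<open>0 < a\<close> by auto
  have psi'_mono: "\<psi>' s \<le> \<psi>' x" if "a \<le> s" "s \<le> x" for s x
  proof (rule DERIV_nonneg_imp_increasing_open[OF \<open>s \<le> x\<close>])
    show "\<exists>y. (\<psi>' has_real_derivative y) (at u) \<and> 0 \<le> y" if "s < u" "u < x" for u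
      using psi'_deriv[of u] convex[of u] that \<open>a \<le> s\<close> \<open>\<kappa> < a\<close> \<open>0 < a\<close> by auto
    show "continuous_on {s..x} \<psi>'"
      using \<open>a \<le> s\<close> \<open>0 < a\<close> by (intro continuous_on_subset[OF continuous_on_psi']) auto
  qed
  define x where "x = a + (\<bar>\<mu> \<kappa>\<bar> + r * \<psi> a / \<psi>' a) / c"
  have "0 \<le> r * \<psi> a / \<psi>' a"
    using r_pos \<open>0 < \<psi> a\<close> \<open>0 < \<psi>' a\<close> by simp
  then have "a \<le> x" unfolding x_def using c_pos by simp
  have "c * (x - \<kappa>) = c + \<bar>\<mu> \<kappa>\<bar> + r * \<psi> a / \<psi>' a"
    unfolding x_def a_def using c_pos by (simp add: field_simps)
  then have coef: "r * \<psi> a / \<psi>' a \<le> \<mu> \<kappa> + c * (x - \<kappa>) + r"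
    using c_pos r_pos abs_ge_minus_self[of "\<mu> \<kappa>"] by linarith
  have tangent: "\<psi> x - \<psi> a \<le> \<psi>' x * (x - a)"
    by (rule diff_le_by_deriv_bound[OF \<open>a \<le> x\<close>])
      (use \<open>0 < a\<close> psi'_mono in \<open>auto intro: psi_deriv continuous_on_subset[OF continuous_on_psi]\<close>)
  have "\<mu> \<kappa> + (r + c) * (x - \<kappa>) \<le> \<mu> x"
    using drift_slope_gt[of \<kappa> x] \<open>\<kappa> < a\<close> \<open>a \<le> x\<close> by simp
  then have "(\<mu> \<kappa> + (r + c) * (x - \<kappa>)) * \<psi>' x \<le> \<mu> x * \<psi>' x"
    using psi'_pos[of x] \<open>0 < a\<close> \<open>a \<le> x\<close> by (intro mult_right_mono) auto
  moreover have "\<mu> x * \<psi>' x < r * \<psi> x"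
    using convex[of x] psi''_pos_iff[of x] \<open>\<kappa> < a\<close> \<open>0 < a\<close> \<open>a \<le> x\<close> by simp
  moreover have "r * (\<psi> x - \<psi> a) \<le> r * (\<psi>' x * (x - a))"
    using tangent r_pos by (intro mult_left_mono) auto
  moreover have "\<psi>' x * (\<mu> \<kappa> + c * (x - \<kappa>) + r) =
      (\<mu> \<kappa> + (r + c) * (x - \<kappa>)) * \<psi>' x - r * (\<psi>' x * (x - a))"
    unfolding a_def by (simp add: algebra_simps)
  ultimately have "\<psi>' x * (\<mu> \<kappa> + c * (x - \<kappa>) + r) < r * \<psi> a"
    by (simp add: algebra_simps)
  moreover have "r * \<psi> a \<le> \<psi>' x * (\<mu> \<kappa> + c * (x - \<kappa>) + r)"
  proof -
    have "r * \<psi> a = \<psi>' a * (r * \<psi> a / \<psi>' a)"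
      using \<open>0 < \<psi>' a\<close> by simp
    also have "\<dots> \<le> \<psi>' x * (\<mu> \<kappa> + c * (x - \<kappa>) + r)"
      using psi'_mono[of a x] \<open>a \<le> x\<close> coef \<open>0 \<le> r * \<psi> a / \<psi>' a\<close> \<open>0 < \<psi>' a\<close>
      by (intro mult_mono) auto
    finally show ?thesis .
  qed
  ultimately show False by simp
qed

lemma psi''_unique_inflection:
  "\<exists>!b. \<kappa> \<le> b \<and> (\<forall>x\<in>{\<kappa><..<b}. 0 < \<psi>'' x) \<and> (\<forall>x\<in>{b<..}. \<psi>'' x < 0)"
proof (rule unique_downcrossing[OF _ psi''_downcrossing psi''_nonpos_somewhere])
  show "continuous_on {\<kappa><..} \<psi>''"
    using kappa_nonneg by (intro continuous_on_subset[OF d2_cont]) auto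
qed

lemma psi'_not_bounded_away_from_0:
  assumes "\<kappa> < a" and "0 < L"
    and lower: "\<And>x. a \<le> x \<Longrightarrow> L \<le> \<psi>' x" and upper: "\<And>x. a \<le> x \<Longrightarrow> \<psi>' x \<le> \<psi>' a"
    and slope: "r * \<psi>' a < (r + c) * L"
  shows False
proof -
  have "0 < a" using assms kappa_nonneg by simp
  obtain K where K: "K-lipschitz_on {0..} \<sigma>" using sigma_lip by blast
  define S where "S = \<bar>\<sigma> 0\<bar> + K"
  have "0 < S" unfolding S_def using sigma_pos[of 0] lipschitz_on_nonneg[OF K] by simp
  define \<delta> where "\<delta> = (r + c) * L - r * \<psi>' a"
  define C where "C = (\<mu> \<kappa> - (r + c) * \<kappa>) * L - r * \<psi> a"
  have "0 < \<delta>" unfolding \<delta>_def using slope by simp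
  have growth: "\<delta> * x + C \<le> \<mu> x * \<psi>' x - r * \<psi> x"
    if "a \<le> x" and drift_nonneg: "0 \<le> \<mu> \<kappa> + (r + c) * (x - \<kappa>)" for x
  proof -
    have "\<psi> x - \<psi> a \<le> \<psi>' a * (x - a)"
      by (rule diff_le_by_deriv_bound[OF \<open>a \<le> x\<close>])
        (use \<open>0 < a\<close> upper in \<open>auto intro: psi_deriv continuous_on_subset[OF continuous_on_psi]\<close>)
    also have "\<dots> \<le> \<psi>' a * x"
      using psi'_pos[of a] \<open>0 < a\<close> by (simp add: mult_left_mono)
    finally have "\<psi> x \<le> \<psi> a + \<psi>' a * x" by simp
    then have "r * \<psi> x \<le> r * (\<psi> a + \<psi>' a * x)"
      using r_pos by (simp add: mult_left_mono)
    moreover have "\<mu> \<kappa> + (r + c) * (x - \<kappa>) \<le> \<mu> x"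
      using drift_slope_gt[of \<kappa> x] \<open>\<kappa> < a\<close> \<open>a \<le> x\<close> by simp
    then have "(\<mu> \<kappa> + (r + c) * (x - \<kappa>)) * L \<le> \<mu> x * \<psi>' x"
      using lower[OF \<open>a \<le> x\<close>] drift_nonneg \<open>0 < L\<close> by (intro mult_mono) auto
    ultimately show ?thesis
      unfolding \<delta>_def C_def by (simp add: algebra_simps)
  qed
  have "\<forall>\<^sub>F x in at_top. a \<le> x \<and> 1 \<le> x \<and> 0 \<le> (r + c) * x + (\<mu> \<kappa> - (r + c) * \<kappa>)
      \<and> 0 \<le> \<delta> / 2 * x + C"
    using r_pos c_pos \<open>0 < \<delta>\<close>
    by (intro eventually_conj eventually_ge_at_top eventually_linear_nonneg_at_top) auto
  then obtain X where X: "\<And>x. X \<le> x \<Longrightarrow> a \<le> x \<and> 1 \<le> x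
      \<and> 0 \<le> (r + c) * x + (\<mu> \<kappa> - (r + c) * \<kappa>) \<and> 0 \<le> \<delta> / 2 * x + C"
    by (auto simp: eventually_at_top_linorder)
  have concave: "\<psi>'' x \<le> - (\<delta> / S\<^sup>2 / x)" if "X \<le> x" for x
  proof -
    have "a \<le> x" "1 \<le> x" "0 < x" "0 \<le> \<delta> / 2 * x + C"
      and "0 \<le> \<mu> \<kappa> + (r + c) * (x - \<kappa>)"
      using X[OF that] by (auto simp: algebra_simps)
    then have "\<delta> * x \<le> 2 * (\<mu> x * \<psi>' x - r * \<psi> x)"
      using growth[of x] by simp
    have "0 < \<sigma> x" using sigma_pos \<open>0 < x\<close> by simp
    have "\<sigma> x \<le> S * x"
      using lipschitz_on_linear_growth[OF K \<open>1 \<le> x\<close>] unfolding S_def by simp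
    then have "(\<sigma> x)\<^sup>2 \<le> (S * x)\<^sup>2"
      using \<open>0 < \<sigma> x\<close> by (intro power_mono) auto
    have "\<delta> / S\<^sup>2 / x = \<delta> * x / (S * x)\<^sup>2"
      using \<open>0 < x\<close> by (simp add: field_simps power2_eq_square)
    also have "\<dots> \<le> \<delta> * x / (\<sigma> x)\<^sup>2"
      using \<open>(\<sigma> x)\<^sup>2 \<le> (S * x)\<^sup>2\<close> \<open>0 < \<sigma> x\<close> \<open>0 < \<delta>\<close> \<open>0 < x\<close> \<open>0 < S\<close>
      by (intro divide_left_mono) auto
    also have "\<dots> \<le> 2 * (\<mu> x * \<psi>' x - r * \<psi> x) / (\<sigma> x)\<^sup>2"
      using \<open>\<delta> * x \<le> 2 * (\<mu> x * \<psi>' x - r * \<psi> x)\<close> by (simp add: divide_right_mono)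
    also have "\<dots> = - \<psi>'' x"
      using psi''_eq[of x] \<open>0 < x\<close> by (simp add: algebra_simps minus_divide_left)
    finally show ?thesis by simp
  qed
  have "0 < X" using X[of X] by simp
  moreover have "0 < \<delta> / S\<^sup>2" using \<open>0 < \<delta>\<close> \<open>0 < S\<close> by simp
  ultimately obtain y where "X \<le> y" "\<psi>' y < 0"
    using deriv_le_neg_inverse_unbounded_below[of X "\<delta> / S\<^sup>2" \<psi>' \<psi>'' 0] psi'_deriv concave
    by force
  then show False using psi'_pos[of y] \<open>0 < X\<close> by simp
qed

lemma psi'_tendsto_0:
  assumes "\<kappa> \<le> b" and concave: "\<forall>x\<in>{b<..}. \<psi>'' x < 0"
  shows "(\<lambda>n. \<psi>' (real n)) \<longlonglongrightarrow> 0"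
proof -
  define a0 where "a0 = b + 1"
  have "\<kappa> < a0" "0 < a0" unfolding a0_def using assms kappa_nonneg by auto
  have antimono: "\<psi>' y \<le> \<psi>' x" if "a0 \<le> x" "x \<le> y" for x y
  proof (rule DERIV_nonpos_imp_decreasing_open[OF \<open>x \<le> y\<close>])
    show "\<exists>l. (\<psi>' has_real_derivative l) (at u) \<and> l \<le> 0" if "x < u" "u < y" for u
    proof -
      have "0 < u" "b < u" using that \<open>a0 \<le> x\<close> \<open>0 < a0\<close> unfolding a0_def by auto
      then show ?thesis using psi'_deriv[of u] concave by force
    qed
    show "continuous_on {x..y} \<psi>'"
      using \<open>a0 \<le> x\<close> \<open>0 < a0\<close> by (intro continuous_on_subset[OF continuous_on_psi']) auto
  qed
  define L where "L = Inf (\<psi>' ` {a0..})"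
  have "bdd_below (\<psi>' ` {a0..})"
  proof (rule bdd_belowI)
    show "0 \<le> y" if "y \<in> \<psi>' ` {a0..}" for y
      using that psi'_pos \<open>0 < a0\<close> by (auto intro: less_imp_le)
  qed
  then have L_le: "L \<le> \<psi>' x" if "a0 \<le> x" for x
    unfolding L_def using that by (auto intro: cInf_lower)
  have small: "\<exists>a\<ge>a0. \<psi>' a < e" if "L < e" for e
    using cInf_lessD[of "\<psi>' ` {a0..}" e] that unfolding L_def by auto
  have "L \<le> 0"
  proof (rule ccontr)
    assume "\<not> L \<le> 0"
    then have "L < (r + c) * L / r"
      using r_pos c_pos by (simp add: field_simps)
    then obtain a where "a0 \<le> a" "\<psi>' a < (r + c) * L / r"
      using small by blast
    then show False
      using psi'_not_bounded_away_from_0[of a L] L_le antimono \<open>\<kappa> < a0\<close> \<open>\<not> L \<le> 0\<close> r_pos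
      by (simp add: pos_less_divide_eq mult.commute)
  qed
  have "(\<psi>' \<longlongrightarrow> 0) at_top"
  proof (rule order_tendstoI)
    show "\<forall>\<^sub>F x in at_top. e < \<psi>' x" if "e < 0" for e
      by (rule eventually_mono[OF eventually_ge_at_top[of 0]]) (use psi'_pos that in force)
    show "\<forall>\<^sub>F x in at_top. \<psi>' x < e" if "0 < e" for e
    proof -
      obtain a where "a0 \<le> a" "\<psi>' a < e"
        using small \<open>L \<le> 0\<close> \<open>0 < e\<close> by force
      then have "\<psi>' x < e" if "a \<le> x" for x
        using antimono[of a x] that by simp
      then show ?thesis
        by (rule eventually_mono[OF eventually_ge_at_top[of a]])
    qed
  qed
  then show ?thesis
    using filterlim_compose filterlim_real_sequentially by blast
qed

end

theorem lemmaA2: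
  fixes r c \<kappa> :: real
    and \<mu> \<sigma> \<psi> \<psi>' \<psi>'' :: "real \<Rightarrow> real"
  assumes r_pos: "r > 0"
    and mu_lip: "\<exists>L. L-lipschitz_on {0..} \<mu>"
    and sigma_lip: "\<exists>L. L-lipschitz_on {0..} \<sigma>"
    and sigma_pos: "\<And>x. x \<ge> 0 \<Longrightarrow> \<sigma> x > 0"
    and kappa: "\<kappa> \<ge> 0" and c_pos: "c > 0"
    and mono_drift: "strict_mono_on {\<kappa>..} (\<lambda>x. \<mu> x - (r + c) * x)"
    and d1: "\<And>x. x \<ge> 0 \<Longrightarrow> (\<psi> has_real_derivative \<psi>' x) (at x within {0..})"
    and d2: "\<And>x. x \<ge> 0 \<Longrightarrow> (\<psi>' has_real_derivative \<psi>'' x) (at x within {0..})"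
    and d2_cont: "continuous_on {0..} \<psi>''"
    and ode: "\<And>x. x \<ge> 0 \<Longrightarrow> (\<sigma> x)\<^sup>2 / 2 * \<psi>'' x + \<mu> x * \<psi>' x = r * \<psi> x"
    and nonneg: "\<And>x. x \<ge> 0 \<Longrightarrow> \<psi> x \<ge> 0"
    and incr: "mono_on {0..} \<psi>"
    and init0: "\<psi> 0 = 0" and init1: "\<psi>' 0 = 1"
  shows "(\<forall>x\<ge>0. \<psi>' x > 0)
    \<and> (\<exists>!b2. b2 \<ge> \<kappa> \<and> (\<forall>x\<in>{\<kappa><..<b2}. \<psi>'' x > 0) \<and> (\<forall>x\<in>{b2<..}. \<psi>'' x < 0))
    \<and> ((\<lambda>n. \<psi>' (real n)) \<longlonglongrightarrow> 0)"
proof -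
  interpret increasing_fundamental_solution r c \<kappa> \<mu> \<sigma> \<psi> \<psi>' \<psi>''
    by unfold_locales (fact assms)+
  obtain b2 where "\<kappa> \<le> b2" "\<forall>x\<in>{b2<..}. \<psi>'' x < 0"
    using psi''_unique_inflection by blast
  then show ?thesis
    using psi'_pos psi''_unique_inflection psi'_tendsto_0 by blast
qed

end
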